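(* There exists an absolute constant $c$ such that for all integers $n\ge 5$ and $k\ge t_{n-1}(cn)$, every function $\pi_{n,k}$ has maximum distortion at least $4$. In particular, there exist $n$ and $k$ such that every function $\pi_{n,k}$ has maximum distortion at least $4$ (equivalently, every set of functions assigning $n$ agents to $k$ tasks has maximum switching cost at least $4$).
   Context: For positive integers $n,k$, let $\mathcal S_{n,k}$ be the set of all multisets of size $n$ with elements from $[k]=\{1,\dots,k\}$. A function $\pi_{n,k}$ assigns to each $S\in\mathcal S_{n,k}$ a string $\pi_{n,k}(S)$ of length $n$ (positions indexed by $[n]$) whose letters, counted with multiplicity, form exactly the multiset $S$ (i.e. a permutation of $S$). For strings $X,Y$ of equal length, $d(X,Y)$ denotes their Hamming distance. For multisets $A,B$, the symmetric difference $A\oplus B$ is the multiset obtained by removing from $A$ and from $B$ their maximal common sub-multiset $A\cap B$ and taking the union of what remains. A pair $S,S'\in\mathcal S_{n,k}$ with $|S\oplus S'|=2$ has distortion $d(\pi_{n,k}(S),\pi_{n,k}(S'))$; the maximum distortion of $\pi_{n,k}$ is the maximum distortion over all pairs $S,S'\in\mathcal S_{n,k}$ with $|S\oplus S'|=2$. The tower function is defined by $t_1(x)=x$ and $t_{i+1}(x)=2^{t_i(x)}$. *)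

theory Defs
  imports Complex_Main "HOL-Library.Multiset"
begin

definition msets :: "nat \<Rightarrow> nat \<Rightarrow> nat multiset set" where
  "msets n k = {S. size S = n \<and> set_mset S \<subseteq> {1..k}}"

definition valid_assignment :: "nat \<Rightarrow> nat \<Rightarrow> (nat multiset \<Rightarrow> nat list) \<Rightarrow> bool" where
  "valid_assignment n k p \<longleftrightarrow> (\<forall>S \<in> msets n k. length (p S) = n \<and> mset (p S) = S)"

definition hamming :: "'a list \<Rightarrow> 'a list \<Rightarrow> nat" where
  "hamming xs ys = card {i. i < length xs \<and> xs ! i \<noteq> ys ! i}"

definition symdiff_size :: "'a multiset \<Rightarrow> 'a multiset \<Rightarrow> nat" where
  "symdiff_size A B = size ((A - B) + (B - A))"

definition max_distortion :: "nat \<Rightarrow> nat \<Rightarrow> (nat multiset \<Rightarrow> nat list) \<Rightarrow> nat" where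
  "max_distortion n k p =
     Max {hamming (p S) (p S') | S S'. S \<in> msets n k \<and> S' \<in> msets n k \<and> symdiff_size S S' = 2}"

text \<open>Tower function: t_1(x) = x, t_{i+1}(x) = 2^{t_i(x)} (index 0 is unused; set to x).\<close>
fun tower :: "nat \<Rightarrow> real \<Rightarrow> real" where
  "tower 0 x = x"
| "tower (Suc 0) x = x"
| "tower (Suc (Suc i)) x = 2 powr (tower (Suc i) x)"

end

theory Submission
  imports Defs
begin

text \<open>
  For \<open>a < b < c < d\<close> let \<open>S(a,b,c,d)\<close> be the multiset of \<open>n - 4\<close> copies of \<open>1\<close> together with
  \<open>a, b, c, d\<close>, and colour the quadruple by the positions of \<open>a, b, c, d\<close> in the string
  assigned to \<open>S(a,b,c,d)\<close>; there are \<open>n\<^sup>4\<close> colours. A nested pigeonhole argument (colour each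
  \<open>a\<close> by the set of colours of the sets of colours of the quadruples it starts) finds
  \<open>a\<^sub>1 < \<dots> < a\<^sub>5\<close> such that \<open>(a\<^sub>1,\<dots>,a\<^sub>4)\<close> and \<open>(a\<^sub>2,\<dots>,a\<^sub>5)\<close> get the same colour, as soon as
  \<open>k > 2^2^2^(n\<^sup>4)\<close>. The two multisets differ by one swap, yet the strings assigned to them
  disagree in the four positions carrying \<open>a\<^sub>1,\<dots>,a\<^sub>4\<close>, which hold \<open>a\<^sub>2,\<dots>,a\<^sub>5\<close> in the other string.
\<close>

lemma shift_pigeonhole:
  fixes A :: "'a::linorder set" and f :: "'a \<Rightarrow> 'a \<Rightarrow> 'a \<Rightarrow> 'a \<Rightarrow> 'c"
  assumes C: "finite C" and A: "2 ^ 2 ^ 2 ^ card C < card A"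
    and f: "\<And>a b c d. a \<in> A \<Longrightarrow> b \<in> A \<Longrightarrow> c \<in> A \<Longrightarrow> d \<in> A \<Longrightarrow> f a b c d \<in> C"
  shows "\<exists>a1 a2 a3 a4 a5. {a1, a2, a3, a4, a5} \<subseteq> A \<and> a1 < a2 \<and> a2 < a3 \<and> a3 < a4 \<and> a4 < a5
           \<and> f a1 a2 a3 a4 = f a2 a3 a4 a5"
proof -
  define above where "above x = {y \<in> A. x < y}" for x
  define T3 where "T3 a b c = f a b c ` above c" for a b c
  define T2 where "T2 a b = T3 a b ` above b" for a b
  define T1 where "T1 a = T2 a ` above a" for a
  have "T1 ` A \<subseteq> Pow (Pow (Pow C))"
    using f unfolding T1_def T2_def T3_def above_def by fastforce
  moreover have "card (Pow (Pow (Pow C))) < card A"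
    using A C by (simp add: card_Pow)
  ultimately have "\<not> inj_on T1 A"
    using C card_inj_on_le by (metis finite_Pow_iff not_le)
  then obtain a1 a2 where a12: "a1 \<in> A" "a2 \<in> A" "a1 < a2" and e1: "T1 a1 = T1 a2"
    unfolding inj_on_def by (metis linorder_neqE)
  have "T2 a1 a2 \<in> T1 a2"
    using a12 e1 unfolding T1_def above_def by auto
  then obtain a3 where a3: "a3 \<in> A" "a2 < a3" and e2: "T2 a1 a2 = T2 a2 a3"
    unfolding T1_def above_def by auto
  have "T3 a1 a2 a3 \<in> T2 a2 a3"
    using a3 e2 unfolding T2_def above_def by auto
  then obtain a4 where a4: "a4 \<in> A" "a3 < a4" and e3: "T3 a1 a2 a3 = T3 a2 a3 a4"
    unfolding T2_def above_def by auto
  have "f a1 a2 a3 a4 \<in> T3 a2 a3 a4"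
    using a4 e3 unfolding T3_def above_def by auto
  then obtain a5 where "a5 \<in> A" "a4 < a5" "f a1 a2 a3 a4 = f a2 a3 a4 a5"
    unfolding T3_def above_def by auto
  with a12 a3 a4 show ?thesis by blast
qed

definition position :: "'a list \<Rightarrow> 'a \<Rightarrow> nat" where
  "position xs a = (LEAST i. i < length xs \<and> xs ! i = a)"

lemma position_correct:
  assumes "a \<in> set xs"
  shows "position xs a < length xs" "xs ! position xs a = a"
proof -
  have "\<exists>i. i < length xs \<and> xs ! i = a"
    using assms by (simp add: in_set_conv_nth)
  then have "position xs a < length xs \<and> xs ! position xs a = a"
    unfolding position_def by (rule LeastI_ex)
  then show "position xs a < length xs" "xs ! position xs a = a" by auto
qed

lemma hamming_ge_card:
  assumes "I \<subseteq> {..<length xs}" and "\<And>i. i \<in> I \<Longrightarrow> xs ! i \<noteq> ys ! i"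
  shows "card I \<le> hamming xs ys"
  unfolding hamming_def using assms by (intro card_mono) auto

lemma hamming_le_length: "hamming xs ys \<le> length xs"
proof -
  have "hamming xs ys \<le> card {..<length xs}"
    unfolding hamming_def by (intro card_mono) auto
  then show ?thesis by simp
qed

lemma hamming_le_max_distortion:
  assumes p: "valid_assignment n k p" and "S \<in> msets n k" "S' \<in> msets n k"
    and "symdiff_size S S' = 2"
  shows "hamming (p S) (p S') \<le> max_distortion n k p"
proof -
  let ?D = "{hamming (p S) (p S') | S S'. S \<in> msets n k \<and> S' \<in> msets n k \<and> symdiff_size S S' = 2}"
  have "?D \<subseteq> {..n}"
    using p hamming_le_length unfolding valid_assignment_def by fastforce
  then have "finite ?D"
    by (rule finite_subset) simp
  moreover have "hamming (p S) (p S') \<in> ?D"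
    using assms by blast
  ultimately show ?thesis
    unfolding max_distortion_def by simp
qed

definition window :: "nat \<Rightarrow> nat \<Rightarrow> nat \<Rightarrow> nat \<Rightarrow> nat \<Rightarrow> nat multiset" where
  "window n a b c d = replicate_mset (n - 4) 1 + {#a, b, c, d#}"

lemma window_in_msets:
  "n \<ge> 4 \<Longrightarrow> {a, b, c, d} \<subseteq> {1..k} \<Longrightarrow> window n a b c d \<in> msets n k"
  unfolding window_def msets_def by auto

lemma symdiff_size_window_shift:
  assumes "a1 < a2" "a2 < a3" "a3 < a4" "a4 < a5"
  shows "symdiff_size (window n a1 a2 a3 a4) (window n a2 a3 a4 a5) = 2"
proof -
  define B where "B = replicate_mset (n - 4) 1 + {#a2, a3, a4#}"
  have "window n a1 a2 a3 a4 = add_mset a1 B" "window n a2 a3 a4 a5 = add_mset a5 B"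
    unfolding window_def B_def by (auto simp: add_mset_commute)
  moreover have "a1 \<noteq> a5"
    using assms by simp
  ultimately show ?thesis
    unfolding symdiff_size_def by simp
qed

definition window_positions :: "(nat multiset \<Rightarrow> nat list) \<Rightarrow> nat \<Rightarrow> nat \<Rightarrow> nat \<Rightarrow> nat \<Rightarrow> nat \<Rightarrow> nat list"
  where "window_positions p n a b c d = map (position (p (window n a b c d))) [a, b, c, d]"

lemma assigned_window:
  assumes "valid_assignment n k p" "n \<ge> 4" "{a, b, c, d} \<subseteq> {1..k}"
  shows "length (p (window n a b c d)) = n" "set (p (window n a b c d)) = set_mset (window n a b c d)"
proof -
  have "window n a b c d \<in> msets n k"
    using assms(2,3) by (rule window_in_msets)
  then have "length (p (window n a b c d)) = n \<and> mset (p (window n a b c d)) = window n a b c d"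
    using assms(1) unfolding valid_assignment_def by blast
  then show "length (p (window n a b c d)) = n" "set (p (window n a b c d)) = set_mset (window n a b c d)"
    by (auto simp flip: set_mset_mset)
qed

lemma window_positions_in_range:
  assumes "valid_assignment n k p" "n \<ge> 4" "{a, b, c, d} \<subseteq> {1..k}"
  shows "window_positions p n a b c d \<in> {xs. set xs \<subseteq> {..<n} \<and> length xs = 4}"
proof -
  let ?xs = "p (window n a b c d)"
  have "position ?xs x < n" if "x \<in> {a, b, c, d}" for x
    using that assigned_window[OF assms] position_correct(1)[of x ?xs]
    unfolding window_def by auto
  then show ?thesis
    unfolding window_positions_def by auto
qed

lemma max_distortion_ge_4_if_positions_shift:
  assumes p: "valid_assignment n k p" and n: "n \<ge> 4"
    and a: "{a1, a2, a3, a4, a5} \<subseteq> {1..k}" "a1 < a2" "a2 < a3" "a3 < a4" "a4 < a5"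
    and shift: "window_positions p n a1 a2 a3 a4 = window_positions p n a2 a3 a4 a5"
  shows "4 \<le> max_distortion n k p"
proof -
  let ?S = "window n a1 a2 a3 a4" and ?T = "window n a2 a3 a4 a5"
  let ?P = "position (p ?S)" and ?Q = "position (p ?T)"
  have S: "length (p ?S) = n" "set (p ?S) = set_mset ?S"
    and T: "set (p ?T) = set_mset ?T"
    using assigned_window[OF p n] a(1) by auto
  have P_range: "?P x < n" and P_nth: "p ?S ! ?P x = x" if "x \<in> {a1, a2, a3, a4}" for x
    using that position_correct[of x "p ?S"] S unfolding window_def by auto
  have Q_nth: "p ?T ! ?Q x = x" if "x \<in> {a2, a3, a4, a5}" for x
    using that position_correct[of x "p ?T"] T unfolding window_def by auto
  have PQ: "?P a1 = ?Q a2" "?P a2 = ?Q a3" "?P a3 = ?Q a4" "?P a4 = ?Q a5"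
    using shift unfolding window_positions_def by simp_all
  then have shifted: "p ?T ! ?P a1 = a2" "p ?T ! ?P a2 = a3" "p ?T ! ?P a3 = a4" "p ?T ! ?P a4 = a5"
    by (simp_all add: Q_nth)
  let ?I = "?P ` {a1, a2, a3, a4}"
  have "inj_on ?P {a1, a2, a3, a4}"
    by (rule inj_on_inverseI[where g = "(!) (p ?S)"]) (rule P_nth)
  then have "card ?I = 4"
    using a by (simp add: card_image)
  moreover have "card ?I \<le> hamming (p ?S) (p ?T)"
  proof (rule hamming_ge_card)
    show "?I \<subseteq> {..<length (p ?S)}"
      by (simp add: S(1) image_subset_iff P_range)
    show "p ?S ! i \<noteq> p ?T ! i" if "i \<in> ?I" for i
      using that a by (auto simp: P_nth shifted)
  qed
  moreover have "hamming (p ?S) (p ?T) \<le> max_distortion n k p"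
    using a n window_in_msets symdiff_size_window_shift
    by (intro hamming_le_max_distortion[OF p]) auto
  ultimately show ?thesis by linarith
qed

lemma max_distortion_ge_4:
  assumes p: "valid_assignment n k p" and n: "n \<ge> 4" and k: "2 ^ 2 ^ 2 ^ n ^ 4 < k"
  shows "4 \<le> max_distortion n k p"
proof -
  let ?C = "{xs. set xs \<subseteq> {..<n} \<and> length xs = 4}"
  have C: "finite ?C" "card ?C = n ^ 4"
    by (simp_all add: finite_lists_length_eq card_lists_length_eq)
  have range: "window_positions p n a b c d \<in> ?C"
    if "a \<in> {1..k}" "b \<in> {1..k}" "c \<in> {1..k}" "d \<in> {1..k}" for a b c d
    using that by (intro window_positions_in_range[OF p n]) auto
  have "\<exists>a1 a2 a3 a4 a5. {a1, a2, a3, a4, a5} \<subseteq> {1..k} \<and> a1 < a2 \<and> a2 < a3 \<and> a3 < a4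
      \<and> a4 < a5 \<and> window_positions p n a1 a2 a3 a4 = window_positions p n a2 a3 a4 a5"
    by (rule shift_pigeonhole[OF C(1) _ range]) (simp add: C(2) k)
  then obtain a1 a2 a3 a4 a5 where "{a1, a2, a3, a4, a5} \<subseteq> {1..k}"
      "a1 < a2" "a2 < a3" "a3 < a4" "a4 < a5"
      "window_positions p n a1 a2 a3 a4 = window_positions p n a2 a3 a4 a5"
    by blast
  then show ?thesis
    using max_distortion_ge_4_if_positions_shift[OF p n] by blast
qed

lemma tower_eq_funpow: "tower (Suc i) (real m) = real (((^) 2 ^^ i) m)"
  by (induction i) (simp_all add: powr_realpow)

text \<open>\<open>126\<close> is the least constant with \<open>126 \<cdot> 5 > 5\<^sup>4\<close>; for \<open>n \<ge> 6\<close> the extra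
  exponential of the tower absorbs \<open>n\<^sup>4\<close>.\<close>

lemma n4_less_funpow_pow2:
  assumes "n \<ge> 5"
  shows "n ^ 4 < ((^) (2::nat) ^^ (n - 5)) (126 * n)"
proof (cases "n = 5")
  case False
  then have pred: "n - 5 = Suc (n - 6)"
    using assms by simp
  have "n ^ 4 < (2 ^ n) ^ 4"
    by (simp add: power_strict_mono)
  also have "\<dots> \<le> 2 ^ (126 * n)"
    by (simp add: power_mult[symmetric] mult.commute)
  also have "\<dots> = ((^) (2::nat) ^^ 1) (126 * n)"
    by simp
  also have "\<dots> \<le> ((^) 2 ^^ Suc (n - 6)) (126 * n)"
    by (intro funpow_mono2) (auto simp: mono_def less_imp_le)
  finally show ?thesis by (simp only: pred)
qed simp

lemma tower_bound:
  assumes n: "n \<ge> 5" and k: "tower (n - 1) (126 * real n) \<le> real k"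
  shows "2 ^ 2 ^ 2 ^ n ^ 4 < k"
proof -
  let ?t = "((^) (2::nat) ^^ (n - 5)) (126 * n)"
  have "tower (n - 1) (126 * real n) = real (((^) 2 ^^ (3 + (n - 5))) (126 * n))"
    using tower_eq_funpow[of "n - 2" "126 * n"] n
    by (simp add: numeral_eq_Suc Suc_diff_Suc)
  also have "\<dots> = real (2 ^ 2 ^ 2 ^ ?t)"
    by (simp add: funpow_add numeral_3_eq_3)
  finally have "2 ^ 2 ^ 2 ^ ?t \<le> k"
    using k by linarith
  moreover have "(2::nat) ^ 2 ^ 2 ^ n ^ 4 < 2 ^ 2 ^ 2 ^ ?t"
    using n4_less_funpow_pow2[OF n] by simp
  ultimately show ?thesis by linarith
qed

theorem theorem2:
  shows "(\<exists>c::real. \<forall>n k. n \<ge> 5 \<and> real k \<ge> tower (n - 1) (c * real n) \<longrightarrow>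
            (\<forall>p. valid_assignment n k p \<longrightarrow> max_distortion n k p \<ge> 4))
       \<and> (\<exists>n k. n \<ge> 1 \<and> k \<ge> 1 \<and> (\<forall>p. valid_assignment n k p \<longrightarrow> max_distortion n k p \<ge> 4))"
proof
  have bound: "\<forall>n k. n \<ge> 5 \<and> real k \<ge> tower (n - 1) (126 * real n) \<longrightarrow>
            (\<forall>p. valid_assignment n k p \<longrightarrow> max_distortion n k p \<ge> 4)"
    using max_distortion_ge_4 tower_bound by simp
  then show "\<exists>c::real. \<forall>n k. n \<ge> 5 \<and> real k \<ge> tower (n - 1) (c * real n) \<longrightarrow>
            (\<forall>p. valid_assignment n k p \<longrightarrow> max_distortion n k p \<ge> 4)"
    by blast
  obtain k :: nat where k: "tower (5 - 1) (126 * real (5::nat)) \<le> real k"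
    using real_arch_simple by blast
  have "0 < k"
    using tower_bound[OF order_refl k] by (rule le_less_trans[OF zero_le])
  moreover have "\<forall>p. valid_assignment 5 k p \<longrightarrow> max_distortion 5 k p \<ge> 4"
    using bound[rule_format, OF conjI[OF order_refl k]] by blast
  ultimately show "\<exists>n k. n \<ge> 1 \<and> k \<ge> 1 \<and> (\<forall>p. valid_assignment n k p \<longrightarrow> max_distortion n k p \<ge> 4)"
    by (intro exI[of _ "5::nat"] exI[of _ k]) simp
qed

end
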